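(* Let $(G,k)$ be an instance, let $v$ be a large-sparse vertex, and let $B\subseteq V\setminus\{v\}$ with $|B|\le 2k$ be such that $G-B$ has no cycle passing through $v$. Let $C$ be a connected component of $G-v-B$ that contains a neighbor of $v$, is a tree, and has no vertex adjacent to a vertex of $B$. Then $(G,k)$ is a yes-instance if and only if $(G-V(C),k)$ is a yes-instance.
   Context: Graphs are undirected, without self-loops, possibly with multi-edges. $N(v)$ is the set of vertices adjacent to $v$; $\rho(v)$ is the number of unordered pairs $\{u_1,u_2\}\subseteq N(v)$ joined by at least one edge. A vertex $v$ is large-sparse if $|N(v)|>7k$ and $\rho(v)\le |N(v)|(|N(v)|-1)/4$. A vertex set induces a clique if between any two distinct vertices there is exactly one edge, and a tree if it is connected and acyclic (two parallel edges form a cycle). A feasible solution is $X\subseteq V$, $|X|\le k$, with every component of $G-X$ a clique or a tree; $(G,k)$ is a yes-instance if a feasible solution exists. *)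

theory Defs
  imports Complex_Main
begin

text \<open>A finite undirected multigraph without self-loops is given by a vertex set V and a
  symmetric edge-multiplicity function m (m u w = number of edges between u and w).\<close>

definition mgraph :: "'a set \<Rightarrow> ('a \<Rightarrow> 'a \<Rightarrow> nat) \<Rightarrow> bool" where
  "mgraph V m \<longleftrightarrow> finite V \<and> (\<forall>u w. m u w = m w u) \<and> (\<forall>u. m u u = 0)
     \<and> (\<forall>u w. 0 < m u w \<longrightarrow> u \<in> V \<and> w \<in> V)"

definition restrict_edges :: "('a \<Rightarrow> 'a \<Rightarrow> nat) \<Rightarrow> 'a set \<Rightarrow> 'a \<Rightarrow> 'a \<Rightarrow> nat" where
  "restrict_edges m S = (\<lambda>u w. if u \<in> S \<and> w \<in> S then m u w else 0)"

definition nbrs :: "'a set \<Rightarrow> ('a \<Rightarrow> 'a \<Rightarrow> nat) \<Rightarrow> 'a \<Rightarrow> 'a set" where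
  "nbrs V m v = {u \<in> V. 0 < m v u}"

definition rho :: "'a set \<Rightarrow> ('a \<Rightarrow> 'a \<Rightarrow> nat) \<Rightarrow> 'a \<Rightarrow> nat" where
  "rho V m v = card {p. \<exists>u1 u2. p = {u1, u2} \<and> u1 \<in> nbrs V m v \<and> u2 \<in> nbrs V m v
                        \<and> u1 \<noteq> u2 \<and> 0 < m u1 u2}"

definition large_sparse :: "'a set \<Rightarrow> ('a \<Rightarrow> 'a \<Rightarrow> nat) \<Rightarrow> nat \<Rightarrow> 'a \<Rightarrow> bool" where
  "large_sparse V m k v \<longleftrightarrow> v \<in> V \<and> card (nbrs V m v) > 7 * k \<and>
     real (rho V m v) \<le> real (card (nbrs V m v)) * (real (card (nbrs V m v)) - 1) / 4"

definition adj_in :: "'a set \<Rightarrow> ('a \<Rightarrow> 'a \<Rightarrow> nat) \<Rightarrow> 'a \<Rightarrow> 'a \<Rightarrow> bool" where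
  "adj_in S m u w \<longleftrightarrow> u \<in> S \<and> w \<in> S \<and> 0 < m u w"

definition connected_set :: "'a set \<Rightarrow> ('a \<Rightarrow> 'a \<Rightarrow> nat) \<Rightarrow> bool" where
  "connected_set S m \<longleftrightarrow> (\<forall>u\<in>S. \<forall>w\<in>S. (adj_in S m)\<^sup>*\<^sup>* u w)"

definition is_component :: "'a set \<Rightarrow> ('a \<Rightarrow> 'a \<Rightarrow> nat) \<Rightarrow> 'a set \<Rightarrow> bool" where
  "is_component S m C \<longleftrightarrow> C \<noteq> {} \<and> C \<subseteq> S \<and> connected_set C m
      \<and> (\<forall>u\<in>C. \<forall>w\<in>S - C. m u w = 0)"

text \<open>Cycles in the subgraph induced by S: two parallel edges, or a closed sequence of
  at least three distinct vertices, consecutive ones adjacent.\<close>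
definition cycle_list :: "'a set \<Rightarrow> ('a \<Rightarrow> 'a \<Rightarrow> nat) \<Rightarrow> 'a list \<Rightarrow> bool" where
  "cycle_list S m xs \<longleftrightarrow>
     (length xs = 2 \<and> distinct xs \<and> set xs \<subseteq> S \<and> 2 \<le> m (xs ! 0) (xs ! 1)) \<or>
     (3 \<le> length xs \<and> distinct xs \<and> set xs \<subseteq> S \<and>
        (\<forall>i < length xs. 0 < m (xs ! i) (xs ! ((i + 1) mod length xs))))"

definition has_cycle :: "'a set \<Rightarrow> ('a \<Rightarrow> 'a \<Rightarrow> nat) \<Rightarrow> bool" where
  "has_cycle S m \<longleftrightarrow> (\<exists>xs. cycle_list S m xs)"

definition cycle_through :: "'a set \<Rightarrow> ('a \<Rightarrow> 'a \<Rightarrow> nat) \<Rightarrow> 'a \<Rightarrow> bool" where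
  "cycle_through S m v \<longleftrightarrow> (\<exists>xs. cycle_list S m xs \<and> v \<in> set xs)"

definition induces_clique :: "'a set \<Rightarrow> ('a \<Rightarrow> 'a \<Rightarrow> nat) \<Rightarrow> bool" where
  "induces_clique C m \<longleftrightarrow> (\<forall>u\<in>C. \<forall>w\<in>C. u \<noteq> w \<longrightarrow> m u w = 1)"

definition induces_tree :: "'a set \<Rightarrow> ('a \<Rightarrow> 'a \<Rightarrow> nat) \<Rightarrow> bool" where
  "induces_tree C m \<longleftrightarrow> connected_set C m \<and> \<not> has_cycle C m"

definition feasible :: "'a set \<Rightarrow> ('a \<Rightarrow> 'a \<Rightarrow> nat) \<Rightarrow> nat \<Rightarrow> 'a set \<Rightarrow> bool" where
  "feasible V m k X \<longleftrightarrow> X \<subseteq> V \<and> card X \<le> k \<and>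
     (\<forall>C. is_component (V - X) m C \<longrightarrow> induces_clique C m \<or> induces_tree C m)"

definition yes_instance :: "'a set \<Rightarrow> ('a \<Rightarrow> 'a \<Rightarrow> nat) \<Rightarrow> nat \<Rightarrow> bool" where
  "yes_instance V m k \<longleftrightarrow> (\<exists>X. feasible V m k X)"

end

theory Submission
  imports Defs
begin

text \<open>Deleting vertices preserves feasibility, so only the backward direction needs an
  argument. Let X be a solution of G - C and K a component of G - X meeting C. If v \<in> X then
  K = C. Otherwise K is C glued at the cut vertex v to the component D of (G - C) - X containing
  v, and C together with v is acyclic because no cycle through v avoids B. D is a clique or a
  tree. A clique containing a cycle has at least three vertices; but v has more than 7k
  neighbours, at most k of them in X, at most one in C (two would close a cycle through the
  tree C) and at most 2k in B, so two neighbours in D outside B would form a triangle with v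
  avoiding B. Hence D, and with it K, is acyclic.\<close>

section \<open>Induced subgraphs\<close>

lemma cycle_list_cong:
  assumes "\<And>u w. u \<in> S \<Longrightarrow> w \<in> S \<Longrightarrow> m u w = m' u w"
  shows "cycle_list S m xs \<longleftrightarrow> cycle_list S m' xs"
proof (cases "set xs \<subseteq> S")
  case True
  then have agree: "m (xs ! i) (xs ! j) = m' (xs ! i) (xs ! j)"
    if "i < length xs" "j < length xs" for i j
    using assms that by (simp add: subset_iff)
  then have "m (xs ! i) (xs ! ((i + 1) mod length xs)) = m' (xs ! i) (xs ! ((i + 1) mod length xs))"
    if "i < length xs" for i
    using that by (intro agree mod_less_divisor) auto
  moreover have "length xs = 2 \<Longrightarrow> m (xs ! 0) (xs ! 1) = m' (xs ! 0) (xs ! 1)"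
    by (intro agree) auto
  ultimately show ?thesis
    unfolding cycle_list_def by auto
qed (simp add: cycle_list_def)

lemma has_cycle_cong:
  "(\<And>u w. u \<in> S \<Longrightarrow> w \<in> S \<Longrightarrow> m u w = m' u w) \<Longrightarrow> has_cycle S m \<longleftrightarrow> has_cycle S m'"
  unfolding has_cycle_def using cycle_list_cong by blast

lemma connected_set_cong:
  assumes "\<And>u w. u \<in> S \<Longrightarrow> w \<in> S \<Longrightarrow> m u w = m' u w"
  shows "connected_set S m \<longleftrightarrow> connected_set S m'"
proof -
  have "adj_in S m = adj_in S m'"
    using assms unfolding adj_in_def by (intro ext) auto
  then show ?thesis
    unfolding connected_set_def by simp
qed

lemma induces_clique_cong:
  "(\<And>u w. u \<in> S \<Longrightarrow> w \<in> S \<Longrightarrow> m u w = m' u w) \<Longrightarrow> induces_clique S m \<longleftrightarrow> induces_clique S m'"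
  unfolding induces_clique_def by auto

lemma induces_tree_cong:
  "(\<And>u w. u \<in> S \<Longrightarrow> w \<in> S \<Longrightarrow> m u w = m' u w) \<Longrightarrow> induces_tree S m \<longleftrightarrow> induces_tree S m'"
  unfolding induces_tree_def using connected_set_cong has_cycle_cong by metis

lemma is_component_restrict_edges:
  assumes "S \<subseteq> T"
  shows "is_component S (restrict_edges m T) K \<longleftrightarrow> is_component S m K"
proof (cases "K \<subseteq> S")
  case True
  then have eq: "restrict_edges m T u w = m u w" if "u \<in> K" "w \<in> S" for u w
    using assms that by (auto simp: restrict_edges_def)
  then have "connected_set K (restrict_edges m T) \<longleftrightarrow> connected_set K m"
    using True by (intro connected_set_cong eq) auto
  then show ?thesis
    using eq unfolding is_component_def by auto
qed (simp add: is_component_def)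

lemma feasible_restrict_edges: "feasible V (restrict_edges m V) k X \<longleftrightarrow> feasible V m k X"
proof -
  have "induces_clique K (restrict_edges m V) \<longleftrightarrow> induces_clique K m"
       "induces_tree K (restrict_edges m V) \<longleftrightarrow> induces_tree K m" if "K \<subseteq> V" for K
    using that by (auto intro!: induces_clique_cong induces_tree_cong simp: restrict_edges_def)
  moreover have "is_component K m C \<Longrightarrow> C \<subseteq> K" for K C
    by (simp add: is_component_def)
  ultimately show ?thesis
    unfolding feasible_def by (auto simp: is_component_restrict_edges) (meson Diff_subset order_trans)+
qed

lemma yes_instance_restrict_edges: "yes_instance V (restrict_edges m V) k \<longleftrightarrow> yes_instance V m k"
  by (simp add: yes_instance_def feasible_restrict_edges)

section \<open>Components\<close>

lemma symp_adj_in: "\<forall>u w. m u w = m w u \<Longrightarrow> symp (adj_in S m)"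
  unfolding adj_in_def by (auto intro: sympI)

lemma connected_setI_root:
  assumes sym: "\<forall>u w. m u w = m w u" and root: "\<And>u. u \<in> S \<Longrightarrow> (adj_in S m)\<^sup>*\<^sup>* r u"
  shows "connected_set S m"
  unfolding connected_set_def
proof (intro ballI)
  fix a b assume "a \<in> S" "b \<in> S"
  then have "(adj_in S m)\<^sup>*\<^sup>* a r" "(adj_in S m)\<^sup>*\<^sup>* r b"
    using root sympD[OF symp_rtranclp[OF symp_adj_in[OF sym]]] by blast+
  then show "(adj_in S m)\<^sup>*\<^sup>* a b" by (rule rtranclp_trans)
qed

lemma is_component_closed:
  "is_component S m K \<Longrightarrow> u \<in> K \<Longrightarrow> w \<in> S \<Longrightarrow> 0 < m u w \<Longrightarrow> w \<in> K"
  unfolding is_component_def by fastforce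

lemma connected_subset_component:
  assumes K: "is_component S m K" and "T \<subseteq> S" and T: "connected_set T m"
    and t: "t \<in> T" "t \<in> K"
  shows "T \<subseteq> K"
proof
  fix u assume "u \<in> T"
  then have "(adj_in T m)\<^sup>*\<^sup>* t u" using T t unfolding connected_set_def by blast
  then show "u \<in> K"
    by induction (use t \<open>T \<subseteq> S\<close> is_component_closed[OF K] in \<open>auto simp: adj_in_def\<close>)
qed

lemma is_component_eq:
  assumes K: "is_component S m K" and K': "is_component S m K'" and "u \<in> K" "u \<in> K'"
  shows "K = K'"
proof
  show "K \<subseteq> K'"
    using connected_subset_component[OF K'] K \<open>u \<in> K\<close> \<open>u \<in> K'\<close> by (auto simp: is_component_def)
  show "K' \<subseteq> K"
    using connected_subset_component[OF K] K' \<open>u \<in> K\<close> \<open>u \<in> K'\<close> by (auto simp: is_component_def)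
qed

lemma is_component_subset:
  "is_component S m K \<Longrightarrow> K \<subseteq> S' \<Longrightarrow> S' \<subseteq> S \<Longrightarrow> is_component S' m K"
  unfolding is_component_def by blast

lemma is_component_exists:
  assumes "u \<in> S" and sym: "\<forall>u w. m u w = m w u"
  shows "\<exists>K. is_component S m K \<and> u \<in> K"
proof -
  define K where "K = {w. (adj_in S m)\<^sup>*\<^sup>* u w}"
  have "K \<subseteq> S"
  proof
    fix w assume "w \<in> K"
    then have "(adj_in S m)\<^sup>*\<^sup>* u w" by (simp add: K_def)
    then show "w \<in> S" by induction (use \<open>u \<in> S\<close> in \<open>auto simp: adj_in_def\<close>)
  qed
  have "(adj_in K m)\<^sup>*\<^sup>* u w" if "(adj_in S m)\<^sup>*\<^sup>* u w" for w
    using that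
  proof induction
    case (step y z)
    then have "adj_in K m y z" by (auto simp: adj_in_def K_def intro: rtranclp.rtrancl_into_rtrancl)
    with step.IH show ?case by simp
  qed simp
  then have "connected_set K m"
    by (intro connected_setI_root[OF sym]) (simp add: K_def)
  moreover have "m w x = 0" if "w \<in> K" "x \<in> S - K" for w x
  proof (rule ccontr)
    assume "m w x \<noteq> 0"
    then have "adj_in S m w x" using that \<open>K \<subseteq> S\<close> by (auto simp: adj_in_def)
    then have "x \<in> K" using that(1) by (auto simp: K_def intro: rtranclp.rtrancl_into_rtrancl)
    with that show False by blast
  qed
  moreover have "u \<in> K" by (simp add: K_def)
  ultimately show ?thesis
    using \<open>K \<subseteq> S\<close> unfolding is_component_def by blast
qed

lemma is_component_Diff_attached:
  assumes K: "is_component S m K" and sym: "\<forall>u w. m u w = m w u"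
    and "P \<subseteq> K" and r: "r \<in> K - P"
    and attached: "\<And>p w. p \<in> P \<Longrightarrow> 0 < m p w \<Longrightarrow> w \<in> P \<or> w = r"
  shows "is_component (S - P) m (K - P)"
proof -
  have reach: "u \<in> P \<or> (adj_in (K - P) m)\<^sup>*\<^sup>* r u" if "(adj_in K m)\<^sup>*\<^sup>* r u" for u
    using that
  proof induction
    case (step y z)
    show ?case
    proof (cases "y \<in> P \<or> z \<in> P")
      case True
      then show ?thesis
        using step.hyps(2) attached sym by (auto simp: adj_in_def)
    next
      case False
      have "(adj_in (K - P) m)\<^sup>*\<^sup>* r y" using step.IH False by blast
      moreover have "adj_in (K - P) m y z" using step.hyps(2) False by (auto simp: adj_in_def)
      ultimately show ?thesis by (meson rtranclp.rtrancl_into_rtrancl)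
    qed
  qed simp
  have "connected_set (K - P) m"
    using K r reach by (intro connected_setI_root[OF sym]) (auto simp: is_component_def connected_set_def)
  then show ?thesis
    using K r is_component_closed[OF K] by (auto simp: is_component_def)
qed

section \<open>Cycles and walks\<close>

lemma cycle_list_subset: "cycle_list S m xs \<Longrightarrow> set xs \<subseteq> S"
  unfolding cycle_list_def by blast

lemma cycle_list_mono: "cycle_list S m xs \<Longrightarrow> set xs \<subseteq> T \<Longrightarrow> cycle_list T m xs"
  unfolding cycle_list_def by blast

lemma has_cycle_mono: "has_cycle S m \<Longrightarrow> S \<subseteq> T \<Longrightarrow> has_cycle T m"
  unfolding has_cycle_def cycle_list_def by blast

lemma cycle_list_long_iff:
  assumes "3 \<le> length xs"
  shows "cycle_list S m xs \<longleftrightarrow> distinct xs \<and> set xs \<subseteq> S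
           \<and> successively (\<lambda>x y. 0 < m x y) xs \<and> 0 < m (last xs) (hd xs)"
proof -
  obtain n where n: "length xs = Suc n" using assms by (cases "length xs") auto
  have "Suc i mod Suc n = Suc i" if "i < n" for i
    using that by simp
  then have "(\<forall>i < length xs. 0 < m (xs ! i) (xs ! ((i + 1) mod length xs))) \<longleftrightarrow>
        (\<forall>i < n. 0 < m (xs ! i) (xs ! Suc i)) \<and> 0 < m (xs ! n) (xs ! 0)"
    using assms n by (auto simp: less_Suc_eq)
  moreover have "xs \<noteq> []" using assms by auto
  ultimately show ?thesis
    using assms n unfolding cycle_list_def
    by (simp add: successively_conv_nth last_conv_nth hd_conv_nth)
qed

lemma cycle_list_closed_walk:
  assumes sym: "\<forall>u w. m u w = m w u" and "cycle_list S m xs"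
  shows "xs \<noteq> [] \<and> distinct xs \<and> set xs \<subseteq> S
           \<and> successively (\<lambda>x y. 0 < m x y) xs \<and> 0 < m (last xs) (hd xs)"
proof (cases "length xs = 2")
  case True
  then obtain a b where "xs = [a, b]"
    by (auto simp: numeral_2_eq_2 length_Suc_conv)
  then show ?thesis using assms by (auto simp: cycle_list_def)
next
  case False
  then have "3 \<le> length xs" using assms(2) by (auto simp: cycle_list_def)
  then show ?thesis using assms(2) cycle_list_long_iff by fastforce
qed

lemma cycle_list_triangle:
  "distinct [a, b, c] \<Longrightarrow> {a, b, c} \<subseteq> S \<Longrightarrow> 0 < m a b \<Longrightarrow> 0 < m b c \<Longrightarrow> 0 < m c a
    \<Longrightarrow> cycle_list S m [a, b, c]"
  by (simp add: cycle_list_long_iff)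

lemma adj_in_rtranclp_path:
  assumes "(adj_in S m)\<^sup>*\<^sup>* a b"
  shows "\<exists>xs. xs \<noteq> [] \<and> hd xs = a \<and> last xs = b \<and> distinct xs \<and> set xs \<subseteq> insert a S
           \<and> successively (\<lambda>x y. 0 < m x y) xs"
  using assms
proof induction
  case base
  show ?case by (intro exI[of _ "[a]"]) auto
next
  case (step y z)
  then obtain xs where xs: "xs \<noteq> []" "hd xs = a" "last xs = y" "distinct xs"
    "set xs \<subseteq> insert a S" "successively (\<lambda>x y. 0 < m x y) xs" by blast
  show ?case
  proof (cases "z \<in> set xs")
    case True
    then obtain ys zs where "xs = ys @ z # zs" by (meson split_list)
    with xs show ?thesis
      by (intro exI[of _ "ys @ [z]"]) (auto simp: successively_append_iff hd_append split: if_splits)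
  next
    case False
    with xs step.hyps(2) show ?thesis
      by (intro exI[of _ "xs @ [z]"]) (auto simp: successively_append_iff adj_in_def hd_append)
  qed
qed

lemma walk_avoiding_cut_vertex:
  fixes m :: "'a \<Rightarrow> 'a \<Rightarrow> nat"
  assumes sym: "\<forall>u w. m u w = m w u" and sep: "\<forall>a\<in>S1 - {v}. \<forall>b\<in>S2 - {v}. m a b = 0"
  shows "successively (\<lambda>x y. 0 < m x y) xs \<Longrightarrow> set xs \<subseteq> S1 \<union> S2 - {v}
           \<Longrightarrow> set xs \<subseteq> S1 \<or> set xs \<subseteq> S2"
proof (induction xs)
  case (Cons x xs)
  show ?case
  proof (cases xs)
    case (Cons y ys)
    with Cons.prems have "0 < m x y" "set xs \<subseteq> S1 \<or> set xs \<subseteq> S2" using Cons.IH by auto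
    have x: "x \<in> S1 \<union> S2 - {v}" and y: "y \<in> S1 \<union> S2 - {v}"
      using Cons.prems \<open>xs = y # ys\<close> by auto
    have "m x y \<noteq> 0" "m y x \<noteq> 0" using \<open>0 < m x y\<close> sym[rule_format, of y x] by simp_all
    then have "\<not> (x \<in> S1 - {v} \<and> y \<in> S2 - {v})" "\<not> (y \<in> S1 - {v} \<and> x \<in> S2 - {v})"
      using sep by metis+
    then show ?thesis
      using x y \<open>set xs \<subseteq> S1 \<or> set xs \<subseteq> S2\<close> \<open>xs = y # ys\<close> by auto
  qed (use Cons.prems in auto)
qed simp

text \<open>Cutting the cycle open at v leaves a walk avoiding v.\<close>
lemma cycle_list_cut_vertex:
  assumes sym: "\<forall>u w. m u w = m w u" and sep: "\<forall>a\<in>S1 - {v}. \<forall>b\<in>S2 - {v}. m a b = 0"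
    and cyc: "cycle_list (S1 \<union> S2) m xs" and v: "v \<in> S1" "v \<in> S2"
  shows "set xs \<subseteq> S1 \<or> set xs \<subseteq> S2"
proof -
  have xs: "xs \<noteq> []" "distinct xs" "set xs \<subseteq> S1 \<union> S2"
    "successively (\<lambda>x y. 0 < m x y) xs" "0 < m (last xs) (hd xs)"
    using cycle_list_closed_walk[OF sym cyc] by auto
  show ?thesis
  proof (cases "v \<in> set xs")
    case True
    then obtain ys zs where split: "xs = ys @ v # zs" by (meson split_list)
    have "successively (\<lambda>x y. 0 < m x y) (zs @ ys)"
      using xs(4,5) split
      by (auto simp: successively_append_iff successively_Cons hd_append split: if_splits)
    moreover have "set (zs @ ys) \<subseteq> S1 \<union> S2 - {v}" using xs(2,3) split by auto
    ultimately have "set (zs @ ys) \<subseteq> S1 \<or> set (zs @ ys) \<subseteq> S2"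
      by (rule walk_avoiding_cut_vertex[OF sym sep])
    then show ?thesis using split v by auto
  next
    case False
    then show ?thesis using xs walk_avoiding_cut_vertex[OF sym sep] by blast
  qed
qed

lemma no_cycle_union_cut_vertex:
  assumes sym: "\<forall>u w. m u w = m w u" and sep: "\<forall>a\<in>S1 - {v}. \<forall>b\<in>S2 - {v}. m a b = 0"
    and "\<not> has_cycle S1 m" "\<not> has_cycle S2 m" and "v \<in> S1" "v \<in> S2"
  shows "\<not> has_cycle (S1 \<union> S2) m"
proof
  assume "has_cycle (S1 \<union> S2) m"
  then obtain xs where xs: "cycle_list (S1 \<union> S2) m xs" unfolding has_cycle_def by blast
  then have "set xs \<subseteq> S1 \<or> set xs \<subseteq> S2" using cycle_list_cut_vertex[OF sym sep] assms(5,6) by blast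
  then show False using assms(3,4) cycle_list_mono[OF xs] unfolding has_cycle_def by blast
qed

lemma cycle_through_two_neighbours:
  assumes sym: "\<forall>u w. m u w = m w u" and conn: "connected_set C m"
    and c: "c1 \<in> C" "c2 \<in> C" "c1 \<noteq> c2" and "v \<notin> C" and "insert v C \<subseteq> T"
    and e: "0 < m v c1" "0 < m v c2"
  shows "cycle_through T m v"
proof -
  have "(adj_in C m)\<^sup>*\<^sup>* c1 c2" using conn c unfolding connected_set_def by blast
  from adj_in_rtranclp_path[OF this] obtain xs where xs: "xs \<noteq> []" "hd xs = c1" "last xs = c2"
    "distinct xs" "set xs \<subseteq> insert c1 C" "successively (\<lambda>x y. 0 < m x y) xs"
    by blast
  have "length xs \<noteq> 1" using xs c(3) by (auto simp: length_Suc_conv)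
  then have "3 \<le> length (v # xs)" using xs(1) by (cases xs) (auto simp: Suc_le_eq)
  moreover have "0 < m (last xs) v" using xs(3) e(2) sym by simp
  ultimately have "cycle_list T m (v # xs)"
    using xs e(1) c(1) \<open>v \<notin> C\<close> \<open>insert v C \<subseteq> T\<close>
    by (auto simp: cycle_list_long_iff successively_Cons)
  then show ?thesis unfolding cycle_through_def by auto
qed

lemma has_cycle_clique_card:
  assumes "induces_clique D m" "has_cycle D m" "finite D"
  shows "3 \<le> card D"
proof -
  obtain xs where xs: "cycle_list D m xs" using assms(2) unfolding has_cycle_def by blast
  have "length xs \<noteq> 2"
  proof
    assume "length xs = 2"
    then have "2 \<le> m (xs ! 0) (xs ! 1)" "xs ! 0 \<in> D" "xs ! 1 \<in> D" "xs ! 0 \<noteq> xs ! 1"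
      using xs by (auto simp: cycle_list_def nth_eq_iff_index_eq)
    then show False using assms(1) unfolding induces_clique_def by fastforce
  qed
  then have "3 \<le> length xs" "distinct xs" "set xs \<subseteq> D"
    using xs by (auto simp: cycle_list_def)
  then show ?thesis
    using distinct_card[of xs] card_mono[OF assms(3), of "set xs"] by linarith
qed

section \<open>Solutions\<close>

lemma induces_clique_subset: "induces_clique K m \<Longrightarrow> K' \<subseteq> K \<Longrightarrow> induces_clique K' m"
  unfolding induces_clique_def by blast

lemma induces_tree_subset:
  "induces_tree K m \<Longrightarrow> K' \<subseteq> K \<Longrightarrow> connected_set K' m \<Longrightarrow> induces_tree K' m"
  unfolding induces_tree_def using has_cycle_mono by blast

lemma feasible_subset:
  assumes G: "mgraph V m" and F: "feasible V m k X" and "W \<subseteq> V"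
  shows "feasible W m k (X \<inter> W)"
proof -
  have sym: "\<forall>u w. m u w = m w u" and "finite V" using G unfolding mgraph_def by auto
  have "X \<subseteq> V" "card X \<le> k"
    and FC: "\<And>K. is_component (V - X) m K \<Longrightarrow> induces_clique K m \<or> induces_tree K m"
    using F unfolding feasible_def by auto
  have "card (X \<inter> W) \<le> k"
    using \<open>card X \<le> k\<close> card_mono[OF finite_subset[OF \<open>X \<subseteq> V\<close> \<open>finite V\<close>], of "X \<inter> W"] by simp
  moreover have "induces_clique K' m \<or> induces_tree K' m" if K': "is_component (W - X \<inter> W) m K'" for K'
  proof -
    obtain u where u: "u \<in> K'" and K'_sub: "K' \<subseteq> V - X" and conn: "connected_set K' m"
      using K' \<open>W \<subseteq> V\<close> unfolding is_component_def by auto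
    obtain K where K: "is_component (V - X) m K" "u \<in> K"
      using is_component_exists[OF _ sym] u K'_sub by blast
    have "K' \<subseteq> K" using connected_subset_component[OF K(1) K'_sub conn u K(2)] .
    then show ?thesis
      using FC[OF K(1)] induces_clique_subset induces_tree_subset conn by blast
  qed
  ultimately show ?thesis
    using \<open>X \<subseteq> V\<close> \<open>W \<subseteq> V\<close> unfolding feasible_def by auto
qed

section \<open>A tree hanging from a large-sparse vertex\<close>

locale pendant_tree =
  fixes V :: "'a set" and m :: "'a \<Rightarrow> 'a \<Rightarrow> nat" and k :: nat and v :: 'a and B C :: "'a set"
  assumes graph: "mgraph V m"
    and large_sparse_v: "large_sparse V m k v"
    and B: "B \<subseteq> V - {v}" and card_B: "card B \<le> 2 * k"
    and no_cycle_through_v: "\<not> cycle_through (V - B) m v"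
    and component_C: "is_component (V - ({v} \<union> B)) m C"
    and C_meets_nbrs: "C \<inter> nbrs V m v \<noteq> {}"
    and tree_C: "induces_tree C m"
    and C_B_no_edges: "\<forall>c\<in>C. \<forall>b\<in>B. m c b = 0"
begin

lemma edges_sym: "\<forall>u w. m u w = m w u"
  using graph unfolding mgraph_def by blast

lemma finite_V: "finite V"
  using graph unfolding mgraph_def by blast

lemma edge_in_V: "0 < m u w \<Longrightarrow> w \<in> V"
  using graph unfolding mgraph_def by blast

lemma finite_B: "finite B"
  using B finite_V finite_subset by blast

lemma v_in_V: "v \<in> V"
  using large_sparse_v unfolding large_sparse_def by blast

lemma C_subset: "C \<subseteq> V - ({v} \<union> B)"
  using component_C unfolding is_component_def by blast

lemma C_attached:
  assumes "c \<in> C" "0 < m c w"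
  shows "w \<in> C \<or> w = v"
proof -
  have "w \<notin> B"
  proof
    assume "w \<in> B"
    then have "m c w = 0" using C_B_no_edges assms(1) by simp
    with assms(2) show False by simp
  qed
  then show ?thesis
    using is_component_closed[OF component_C assms(1) _ assms(2)] edge_in_V[OF assms(2)] by blast
qed

lemma nbr_in_C_unique:
  assumes "x \<in> C" "y \<in> C" "0 < m v x" "0 < m v y"
  shows "x = y"
proof (rule ccontr)
  assume "x \<noteq> y"
  have "connected_set C m" using tree_C unfolding induces_tree_def by blast
  moreover have "insert v C \<subseteq> V - B" using C_subset v_in_V B by blast
  moreover have "v \<notin> C" using C_subset by blast
  ultimately have "cycle_through (V - B) m v"
    using cycle_through_two_neighbours[OF edges_sym _ assms(1,2) \<open>x \<noteq> y\<close> _ _ assms(3,4)] by blast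
  then show False using no_cycle_through_v by blast
qed

lemma card_nbrs_C: "card (nbrs V m v \<inter> C) \<le> 1"
  using nbr_in_C_unique finite_subset[OF _ finite_V] C_subset
  by (auto simp: card_le_Suc0_iff_eq nbrs_def)

lemma no_cycle_insert_v_C: "\<not> has_cycle (insert v C) m"
proof
  assume "has_cycle (insert v C) m"
  then obtain xs where xs: "cycle_list (insert v C) m xs" unfolding has_cycle_def by blast
  show False
  proof (cases "v \<in> set xs")
    case True
    have "set xs \<subseteq> V - B" using cycle_list_subset[OF xs] C_subset v_in_V B by blast
    then show False
      using True cycle_list_mono[OF xs] no_cycle_through_v unfolding cycle_through_def by blast
  next
    case False
    then have "set xs \<subseteq> C" using cycle_list_subset[OF xs] by blast
    then show False
      using cycle_list_mono[OF xs] tree_C unfolding induces_tree_def has_cycle_def by blast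
  qed
qed

lemma many_nbrs_outside:
  assumes "finite X" "card X \<le> k" "0 < k"
  shows "2 \<le> card (nbrs V m v - C - X - B)"
proof -
  define N where "N = nbrs V m v"
  have "finite N" using finite_V by (simp add: N_def nbrs_def)
  have "card N - 1 \<le> card (N - C)"
    using card_nbrs_C card_Diff_subset_Int[of N C] \<open>finite N\<close> by (simp add: N_def)
  moreover have "card (N - C) - card X \<le> card (N - C - X)"
    using diff_card_le_card_Diff[OF assms(1)] .
  moreover have "card (N - C - X) - card B \<le> card (N - C - X - B)"
    using diff_card_le_card_Diff[OF finite_B] .
  moreover have "7 * k < card N" using large_sparse_v by (simp add: large_sparse_def N_def)
  ultimately show ?thesis
    using assms card_B unfolding N_def by linarith
qed

lemma clique_through_v_acyclic:
  assumes "induces_clique D m" "v \<in> D" "D \<subseteq> V" "nbrs V m v - C - X \<subseteq> D"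
    and "finite X" "card X \<le> k"
  shows "\<not> has_cycle D m"
proof
  assume "has_cycle D m"
  then have "3 \<le> card D"
    using has_cycle_clique_card assms(1,3) finite_subset[OF _ finite_V] by blast
  have "2 \<le> card (D - {v} - B)"
  proof (cases "k = 0")
    case True
    then have "B = {}" using card_B finite_B by simp
    then show ?thesis using \<open>3 \<le> card D\<close> \<open>v \<in> D\<close> by simp
  next
    case False
    have "v \<notin> nbrs V m v" using graph by (simp add: mgraph_def nbrs_def)
    then have "nbrs V m v - C - X - B \<subseteq> D - {v} - B" using assms(4) by blast
    then have "card (nbrs V m v - C - X - B) \<le> card (D - {v} - B)"
      using finite_subset[OF assms(3) finite_V] by (intro card_mono) auto
    moreover have "2 \<le> card (nbrs V m v - C - X - B)"
      using many_nbrs_outside[OF assms(5,6)] False by simp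
    ultimately show ?thesis by linarith
  qed
  moreover have "finite (D - {v} - B)" using assms(3) finite_V finite_subset by blast
  ultimately have "\<not> (\<forall>a\<in>D - {v} - B. \<forall>b\<in>D - {v} - B. a = b)"
    using card_le_Suc0_iff_eq by (metis not_less_eq_eq numeral_2_eq_2)
  then obtain u1 u2 where u: "u1 \<in> D - {v} - B" "u2 \<in> D - {v} - B" "u1 \<noteq> u2"
    by blast
  then have "cycle_list (V - B) m [v, u1, u2]"
    using assms(1-3) B by (intro cycle_list_triangle) (auto simp: induces_clique_def)
  then show False
    using no_cycle_through_v unfolding cycle_through_def by force
qed

lemma component_meeting_C_is_tree:
  assumes X: "X \<subseteq> V - C" "card X \<le> k" "v \<notin> X"
    and FC: "\<And>D. is_component (V - C - X) m D \<Longrightarrow> induces_clique D m \<or> induces_tree D m"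
    and K: "is_component (V - X) m K" and c: "c \<in> K" "c \<in> C"
  shows "induces_tree K m"
proof -
  have "C \<subseteq> K"
    using connected_subset_component[OF K _ _ c(2,1)] C_subset X(1) tree_C
    unfolding induces_tree_def by blast
  obtain c0 where "c0 \<in> C" "0 < m v c0" using C_meets_nbrs unfolding nbrs_def by blast
  then have "v \<in> K"
    using is_component_closed[OF K, of c0 v] \<open>C \<subseteq> K\<close> v_in_V X(3) edges_sym by auto
  then have v: "v \<in> K - C" using C_subset by blast
  have "V - X - C = V - C - X" by blast
  then have D: "is_component (V - C - X) m (K - C)"
    using is_component_Diff_attached[OF K edges_sym \<open>C \<subseteq> K\<close> v] C_attached by simp
  have "\<not> has_cycle (K - C) m"
    using FC[OF D]
  proof
    assume clique: "induces_clique (K - C) m"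
    have "nbrs V m v - C - X \<subseteq> K - C"
      using is_component_closed[OF K \<open>v \<in> K\<close>] by (auto simp: nbrs_def)
    moreover have "K - C \<subseteq> V" using K unfolding is_component_def by blast
    moreover have "finite X" using X(1) finite_subset finite_V by blast
    ultimately show ?thesis
      using clique_through_v_acyclic[OF clique v] X(2) by blast
  qed (simp add: induces_tree_def)
  moreover have "m a b = 0" if "a \<in> K - C - {v}" "b \<in> insert v C - {v}" for a b
  proof (rule ccontr)
    assume "m a b \<noteq> 0"
    then have "0 < m b a" using edges_sym[rule_format, of b a] by simp
    then show False using C_attached[of b a] that by blast
  qed
  ultimately have "\<not> has_cycle (K - C \<union> insert v C) m"
    using no_cycle_union_cut_vertex[OF edges_sym _ _ no_cycle_insert_v_C, of "K - C"] v by blast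
  moreover have "K - C \<union> insert v C = K" using \<open>C \<subseteq> K\<close> \<open>v \<in> K\<close> by blast
  ultimately show ?thesis
    using K unfolding induces_tree_def is_component_def by simp
qed

lemma feasible_extend:
  assumes "feasible (V - C) m k X"
  shows "feasible V m k X"
proof -
  have X: "X \<subseteq> V - C" "card X \<le> k"
    and FC: "\<And>D. is_component (V - C - X) m D \<Longrightarrow> induces_clique D m \<or> induces_tree D m"
    using assms unfolding feasible_def by auto
  have "induces_clique K m \<or> induces_tree K m" if K: "is_component (V - X) m K" for K
  proof (cases "K \<inter> C = {}")
    case True
    then have "is_component (V - C - X) m K"
      using K by (intro is_component_subset[OF K]) (auto simp: is_component_def)
    then show ?thesis by (rule FC)
  next
    case False
    then obtain c where c: "c \<in> K" "c \<in> C" by blast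
    show ?thesis
    proof (cases "v \<in> X")
      case True
      have "is_component (V - X) m C"
        unfolding is_component_def
      proof (intro conjI ballI)
        show "C \<noteq> {}" "C \<subseteq> V - X" using c C_subset X(1) by auto
        show "connected_set C m" using tree_C by (simp add: induces_tree_def)
        fix u w assume "u \<in> C" "w \<in> V - X - C"
        then show "m u w = 0" using C_attached[of u w] True by auto
      qed
      then have "K = C" using is_component_eq[OF K _ c] by blast
      then show ?thesis using tree_C by simp
    next
      case False
      then show ?thesis using component_meeting_C_is_tree[OF X False FC K c] by blast
    qed
  qed
  then show ?thesis using X unfolding feasible_def by auto
qed

end

theorem mainTheorem8:
  fixes V :: "'a set" and m :: "'a \<Rightarrow> 'a \<Rightarrow> nat" and k :: nat and v :: 'a
    and B C :: "'a set"
  assumes "mgraph V m"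
    and "large_sparse V m k v"
    and "B \<subseteq> V - {v}" and "card B \<le> 2 * k"
    and "\<not> cycle_through (V - B) m v"
    and "is_component (V - ({v} \<union> B)) m C"
    and "C \<inter> nbrs V m v \<noteq> {}"
    and "induces_tree C m"
    and "\<forall>c\<in>C. \<forall>b\<in>B. m c b = 0"
  shows "yes_instance V m k \<longleftrightarrow> yes_instance (V - C) (restrict_edges m (V - C)) k"
proof -
  interpret pendant_tree V m k v B C
    using assms by unfold_locales
  have "yes_instance V m k \<longleftrightarrow> yes_instance (V - C) m k"
    using feasible_subset[OF graph _ Diff_subset] feasible_extend
    unfolding yes_instance_def by blast
  then show ?thesis
    by (simp add: yes_instance_restrict_edges)
qed

end
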